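(* Let $Q$ be a connected quandle, $S$ a set, $\theta:Q\times Q\to\mathrm{Sym}_S$ a quandle cocycle, $E=Q\times_\theta S$ and $p:E\to Q$, $(x,a)\mapsto x$. The following are equivalent: (i) $\theta$ is cohomologous to the trivial cocycle; (ii) whenever $(x,a),(x,b)\in E$ lie in the same orbit of $\mathrm{LMlt}(E)$, then $a=b$ (i.e. $\ker p\wedge\mathcal{O}_{\mathrm{LMlt}(E)}=0_E$); (iii) for every $u\in E$, the restriction of $p$ to the orbit $u^{\mathrm{LMlt}(E)}$ is a quandle isomorphism $u^{\mathrm{LMlt}(E)}\to Q$.
   Context: A quandle is a set $Q$ with a binary operation $*$ such that every left translation $L_x:y\mapsto x*y$ is bijective, $x*(y*z)=(x*y)*(x*z)$ and $x*x=x$. $\mathrm{LMlt}(Q)=\langle L_x:x\in Q\rangle$; $Q$ is connected if $\mathrm{LMlt}(Q)$ is transitive. A quandle cocycle with values in $\mathrm{Sym}_S$ is $\theta:Q\times Q\to\mathrm{Sym}_S$ with $\theta_{x*y,x*z}\theta_{x,z}=\theta_{x,y*z}\theta_{y,z}$ and $\theta_{x,x}=1$; $\theta$ is cohomologous to the trivial cocycle $\mathbf{1}$ (constantly the identity) if there is $\gamma:Q\to\mathrm{Sym}_S$ with $\theta_{x,y}=\gamma_{x*y}\gamma_y^{-1}$ for all $x,y$. $Q\times_\theta S$ is the quandle on $Q\times S$ with $(x,a)*(y,b)=(x*y,\theta_{x,y}(b))$. Orbits of $\mathrm{LMlt}(E)$ are subquandles of $E$. *)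

theory Defs
  imports Main
begin

definition quandle :: "'q set \<Rightarrow> ('q \<Rightarrow> 'q \<Rightarrow> 'q) \<Rightarrow> bool" where
  "quandle Q op \<longleftrightarrow>
     (\<forall>x\<in>Q. \<forall>y\<in>Q. op x y \<in> Q) \<and>
     (\<forall>x\<in>Q. bij_betw (op x) Q Q) \<and>
     (\<forall>x\<in>Q. \<forall>y\<in>Q. \<forall>z\<in>Q. op x (op y z) = op (op x y) (op x z)) \<and>
     (\<forall>x\<in>Q. op x x = x)"

text \<open>The orbit of u under LMlt(Q) = the group generated by the left translations
  L_x (restricted to Q): closure of u under all L_z and all L_z inverse.\<close>
inductive_set lmlt_orbit :: "'q set \<Rightarrow> ('q \<Rightarrow> 'q \<Rightarrow> 'q) \<Rightarrow> 'q \<Rightarrow> 'q set"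
  for Q op u where
  base: "u \<in> Q \<Longrightarrow> u \<in> lmlt_orbit Q op u"
| fwd: "y \<in> lmlt_orbit Q op u \<Longrightarrow> z \<in> Q \<Longrightarrow> op z y \<in> lmlt_orbit Q op u"
| bwd: "y \<in> lmlt_orbit Q op u \<Longrightarrow> z \<in> Q \<Longrightarrow> w \<in> Q \<Longrightarrow> op z w = y
          \<Longrightarrow> w \<in> lmlt_orbit Q op u"

definition connected_quandle :: "'q set \<Rightarrow> ('q \<Rightarrow> 'q \<Rightarrow> 'q) \<Rightarrow> bool" where
  "connected_quandle Q op \<longleftrightarrow> quandle Q op \<and> (\<forall>x\<in>Q. \<forall>y\<in>Q. y \<in> lmlt_orbit Q op x)"

definition quandle_cocycle ::
  "'q set \<Rightarrow> ('q \<Rightarrow> 'q \<Rightarrow> 'q) \<Rightarrow> 's set \<Rightarrow> ('q \<Rightarrow> 'q \<Rightarrow> 's \<Rightarrow> 's) \<Rightarrow> bool" where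
  "quandle_cocycle Q op S \<theta> \<longleftrightarrow>
     (\<forall>x\<in>Q. \<forall>y\<in>Q. bij_betw (\<theta> x y) S S) \<and>
     (\<forall>x\<in>Q. \<forall>y\<in>Q. \<forall>z\<in>Q. \<forall>a\<in>S.
        \<theta> (op x y) (op x z) (\<theta> x z a) = \<theta> x (op y z) (\<theta> y z a)) \<and>
     (\<forall>x\<in>Q. \<forall>a\<in>S. \<theta> x x a = a)"

definition cohomologous_to_trivial ::
  "'q set \<Rightarrow> ('q \<Rightarrow> 'q \<Rightarrow> 'q) \<Rightarrow> 's set \<Rightarrow> ('q \<Rightarrow> 'q \<Rightarrow> 's \<Rightarrow> 's) \<Rightarrow> bool" where
  "cohomologous_to_trivial Q op S \<theta> \<longleftrightarrow>
     (\<exists>\<gamma>. (\<forall>x\<in>Q. bij_betw (\<gamma> x) S S) \<and>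
          (\<forall>x\<in>Q. \<forall>y\<in>Q. \<forall>a\<in>S. \<theta> x y a = \<gamma> (op x y) (the_inv_into S (\<gamma> y) a)))"

definition ext_op :: "('q \<Rightarrow> 'q \<Rightarrow> 'q) \<Rightarrow> ('q \<Rightarrow> 'q \<Rightarrow> 's \<Rightarrow> 's)
    \<Rightarrow> ('q \<times> 's) \<Rightarrow> ('q \<times> 's) \<Rightarrow> ('q \<times> 's)" where
  "ext_op op \<theta> u v = (op (fst u) (fst v), \<theta> (fst u) (fst v) (snd v))"

definition quandle_iso :: "'a set \<Rightarrow> ('a \<Rightarrow> 'a \<Rightarrow> 'a) \<Rightarrow> 'b set \<Rightarrow> ('b \<Rightarrow> 'b \<Rightarrow> 'b)
    \<Rightarrow> ('a \<Rightarrow> 'b) \<Rightarrow> bool" where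
  "quandle_iso A opA B opB f \<longleftrightarrow> bij_betw f A B \<and>
     (\<forall>x\<in>A. \<forall>y\<in>A. f (opA x y) = opB (f x) (f y))"

end

theory Submission
  imports Defs
begin

text \<open>If \<open>\<theta>\<^sub>x\<^sub>,\<^sub>y = \<gamma>\<^sub>x\<^sub>*\<^sub>y \<gamma>\<^sub>y\<inverse>\<close>, the fibre coordinate \<open>(x, a) \<mapsto> \<gamma>\<^sub>x\<inverse> a\<close> is invariant under every left
  translation of \<open>E\<close>, so an orbit meets each fibre of \<open>p\<close> at most once. Conversely, if orbits
  meet fibres at most once, connectedness of \<open>Q\<close> makes every orbit a section of \<open>p\<close>: fixing
  \<open>x\<^sub>0\<close>, the orbit of \<open>(x\<^sub>0, a)\<close> passes through exactly one point \<open>(y, \<gamma>\<^sub>y a)\<close> over each \<open>y\<close>, and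
  its closure under left translation by points over \<open>x\<close> gives \<open>\<theta>\<^sub>x\<^sub>,\<^sub>y \<gamma>\<^sub>y = \<gamma>\<^sub>x\<^sub>*\<^sub>y\<close>. Finally \<open>p\<close>
  maps every orbit homomorphically onto \<open>Q\<close>, so (iii) says that \<open>p\<close> is injective on orbits,
  which is (ii).\<close>

lemma ext_op_Pair [simp]: "ext_op op \<theta> (x, a) (y, b) = (op x y, \<theta> x y b)"
  by (simp add: ext_op_def)

lemma lmlt_orbit_subset:
  assumes "\<And>x y. x \<in> E \<Longrightarrow> y \<in> E \<Longrightarrow> f x y \<in> E"
  shows "lmlt_orbit E f u \<subseteq> E"
proof
  fix v assume "v \<in> lmlt_orbit E f u"
  then show "v \<in> E" by induct (auto intro: assms)
qed

lemma lmlt_orbit_trans: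
  "w \<in> lmlt_orbit E f v \<Longrightarrow> v \<in> lmlt_orbit E f u \<Longrightarrow> w \<in> lmlt_orbit E f u"
  by (induct rule: lmlt_orbit.induct) (auto intro: lmlt_orbit.intros)

lemma lmlt_orbit_sym:
  assumes closed: "\<And>x y. x \<in> E \<Longrightarrow> y \<in> E \<Longrightarrow> f x y \<in> E"
    and "v \<in> lmlt_orbit E f u"
  shows "u \<in> lmlt_orbit E f v"
  using assms(2)
proof induct
  case base
  then show ?case by (rule lmlt_orbit.base)
next
  case (fwd y z)
  have "y \<in> E" using fwd(1) lmlt_orbit_subset[of E f] closed by blast
  then have "y \<in> lmlt_orbit E f (f z y)"
    using fwd(3) by (auto intro: lmlt_orbit.intros closed)
  with fwd(2) show ?case by (rule lmlt_orbit_trans)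
next
  case (bwd y z w)
  have "y \<in> lmlt_orbit E f w"
    using bwd(3-5) by (auto intro: lmlt_orbit.intros)
  with bwd(2) show ?case by (rule lmlt_orbit_trans)
qed

lemma lmlt_orbit_invariant:
  assumes closed: "\<And>x y. x \<in> E \<Longrightarrow> y \<in> E \<Longrightarrow> f x y \<in> E"
    and invariant: "\<And>z y. z \<in> E \<Longrightarrow> y \<in> E \<Longrightarrow> g (f z y) = g y"
    and "v \<in> lmlt_orbit E f u"
  shows "g v = g u"
  using assms(3)
proof induct
  case (fwd y z)
  have "y \<in> E" using fwd(1) lmlt_orbit_subset[of E f] closed by blast
  with fwd show ?case by (simp add: invariant)
next
  case (bwd y z w)
  then show ?case by (metis invariant)
qed simp

locale twisted_product =
  fixes Q :: "'q set" and op :: "'q \<Rightarrow> 'q \<Rightarrow> 'q"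
    and S :: "'s set" and \<theta> :: "'q \<Rightarrow> 'q \<Rightarrow> 's \<Rightarrow> 's"
  assumes op_closed: "x \<in> Q \<Longrightarrow> y \<in> Q \<Longrightarrow> op x y \<in> Q"
    and bij_betw_\<theta>: "x \<in> Q \<Longrightarrow> y \<in> Q \<Longrightarrow> bij_betw (\<theta> x y) S S"
begin

abbreviation orbit :: "'q \<times> 's \<Rightarrow> ('q \<times> 's) set" where
  "orbit u \<equiv> lmlt_orbit (Q \<times> S) (ext_op op \<theta>) u"

lemma ext_op_closed: "u \<in> Q \<times> S \<Longrightarrow> v \<in> Q \<times> S \<Longrightarrow> ext_op op \<theta> u v \<in> Q \<times> S"
  by (auto simp: ext_op_def op_closed bij_betw_apply[OF bij_betw_\<theta>])

lemma orbit_subset: "orbit u \<subseteq> Q \<times> S"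
  by (rule lmlt_orbit_subset[OF ext_op_closed])

lemma orbit_sym: "v \<in> orbit u \<Longrightarrow> u \<in> orbit v"
  by (rule lmlt_orbit_sym[OF ext_op_closed])

lemma orbit_lift:
  assumes x: "x \<in> Q" and a: "a \<in> S" and "y \<in> lmlt_orbit Q op x"
  shows "\<exists>b\<in>S. (y, b) \<in> orbit (x, a)"
  using assms(3)
proof induct
  case base
  show ?case using x a by (auto intro: lmlt_orbit.base)
next
  case (fwd y z)
  then obtain b where b: "b \<in> S" "(y, b) \<in> orbit (x, a)" by blast
  have "y \<in> Q" using fwd(1) lmlt_orbit_subset[of Q op] op_closed by blast
  have "ext_op op \<theta> (z, a) (y, b) \<in> orbit (x, a)"
    using b(2) by (rule lmlt_orbit.fwd) (simp add: fwd(3) a)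
  then show ?case
    using bij_betw_apply[OF bij_betw_\<theta>[OF fwd(3) \<open>y \<in> Q\<close>] b(1)] by auto
next
  case (bwd y z w)
  then obtain b where b: "b \<in> S" "(y, b) \<in> orbit (x, a)" by blast
  have bij: "bij_betw (\<theta> z w) S S" using bwd(3,4) by (rule bij_betw_\<theta>)
  define c where "c = the_inv_into S (\<theta> z w) b"
  have c: "c \<in> S" "\<theta> z w c = b"
    unfolding c_def using bij b(1)
    by (auto simp: bij_betw_the_inv_into[THEN bij_betw_apply] f_the_inv_into_f_bij_betw)
  have "(w, c) \<in> orbit (x, a)"
    by (rule lmlt_orbit.bwd[OF b(2), of "(z, a)"]) (use a c bwd(3-5) in auto)
  with c(1) show ?case by blast
qed

lemma fst_image_orbit:
  assumes connected: "\<forall>x\<in>Q. \<forall>y\<in>Q. y \<in> lmlt_orbit Q op x" and u: "u \<in> Q \<times> S"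
  shows "fst ` orbit u = Q"
proof
  show "fst ` orbit u \<subseteq> Q" using orbit_subset[of u] by auto
  show "Q \<subseteq> fst ` orbit u"
  proof
    fix y assume "y \<in> Q"
    with u connected obtain b where "(y, b) \<in> orbit u"
      using orbit_lift[of "fst u" "snd u" y] by auto
    then show "y \<in> fst ` orbit u" by force
  qed
qed

lemma quandle_iso_fst_iff_inj_on:
  assumes "\<forall>x\<in>Q. \<forall>y\<in>Q. y \<in> lmlt_orbit Q op x" and "u \<in> Q \<times> S"
  shows "quandle_iso (orbit u) (ext_op op \<theta>) Q op fst \<longleftrightarrow> inj_on fst (orbit u)"
  using fst_image_orbit[OF assms] by (simp add: quandle_iso_def bij_betw_def ext_op_def)

definition orbits_meet_fibres_trivially :: bool where
  "orbits_meet_fibres_trivially \<longleftrightarrow>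
     (\<forall>x\<in>Q. \<forall>a\<in>S. \<forall>b\<in>S. (x, b) \<in> orbit (x, a) \<longrightarrow> a = b)"

lemma orbits_meet_fibres_trivially_iff_inj_on_fst:
  "orbits_meet_fibres_trivially \<longleftrightarrow> (\<forall>u\<in>Q \<times> S. inj_on fst (orbit u))"
proof
  assume trivial: orbits_meet_fibres_trivially
  show "\<forall>u\<in>Q \<times> S. inj_on fst (orbit u)"
  proof (intro ballI inj_onI)
    fix u v v' assume "v \<in> orbit u" "v' \<in> orbit u" "fst v = fst v'"
    then obtain y b b' where v: "v = (y, b)" "v' = (y, b')"
      and orb: "(y, b) \<in> orbit u" "(y, b') \<in> orbit u"
      by (metis prod.collapse)
    have "(y, b') \<in> orbit (y, b)"
      using orb(2) orbit_sym[OF orb(1)] by (rule lmlt_orbit_trans)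
    moreover have "y \<in> Q" "b \<in> S" "b' \<in> S" using orb orbit_subset by blast+
    ultimately show "v = v'" using trivial v by (simp add: orbits_meet_fibres_trivially_def)
  qed
next
  assume "\<forall>u\<in>Q \<times> S. inj_on fst (orbit u)"
  then show orbits_meet_fibres_trivially
    unfolding orbits_meet_fibres_trivially_def
    by (metis inj_onD lmlt_orbit.base mem_Sigma_iff prod.inject fst_conv)
qed

lemma cohomologous_imp_orbits_meet_fibres_trivially:
  assumes "cohomologous_to_trivial Q op S \<theta>"
  shows orbits_meet_fibres_trivially
proof -
  obtain \<gamma> where bij_\<gamma>: "\<And>x. x \<in> Q \<Longrightarrow> bij_betw (\<gamma> x) S S"
    and \<theta>_eq: "\<And>x y a. x \<in> Q \<Longrightarrow> y \<in> Q \<Longrightarrow> a \<in> S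
                   \<Longrightarrow> \<theta> x y a = \<gamma> (op x y) (the_inv_into S (\<gamma> y) a)"
    using assms unfolding cohomologous_to_trivial_def by blast
  define g where "g v = the_inv_into S (\<gamma> (fst v)) (snd v)" for v
  have "g (ext_op op \<theta> z v) = g v" if z: "z \<in> Q \<times> S" and v: "v \<in> Q \<times> S" for z v
  proof -
    obtain x c y a where zv: "z = (x, c)" "v = (y, a)" "x \<in> Q" "y \<in> Q" "a \<in> S"
      using z v by fastforce
    have "g v \<in> S"
      using bij_\<gamma>[OF \<open>y \<in> Q\<close>] \<open>a \<in> S\<close> zv(2)
      by (simp add: g_def bij_betw_the_inv_into[THEN bij_betw_apply])
    then show ?thesis
      using zv bij_\<gamma>[OF op_closed[OF \<open>x \<in> Q\<close> \<open>y \<in> Q\<close>]]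
      by (simp add: g_def ext_op_def \<theta>_eq bij_betw_def the_inv_into_f_f)
  qed
  then have g_orbit: "g v = g u" if "v \<in> orbit u" for u v
    using lmlt_orbit_invariant[OF ext_op_closed _ that] by blast
  show ?thesis unfolding orbits_meet_fibres_trivially_def
  proof (intro ballI impI)
    fix x a b assume "x \<in> Q" "a \<in> S" "b \<in> S" "(x, b) \<in> orbit (x, a)"
    then show "a = b"
      using g_orbit bij_\<gamma>[of x] unfolding g_def
      by (metis bij_betw_def f_the_inv_into_f fst_conv snd_conv)
  qed
qed

text \<open>The trivialising \<open>\<gamma>\<^sub>y\<close> of (i), relative to a base point \<open>x\<^sub>0\<close>.\<close>
definition orbit_gauge :: "'q \<Rightarrow> 'q \<Rightarrow> 's \<Rightarrow> 's" where
  "orbit_gauge x\<^sub>0 y a = (THE b. b \<in> S \<and> (y, b) \<in> orbit (x\<^sub>0, a))"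

context
  fixes x\<^sub>0 :: 'q
  assumes trivial: orbits_meet_fibres_trivially and x\<^sub>0: "x\<^sub>0 \<in> Q"
begin

lemma orbit_gauge_eqI:
  assumes "a \<in> S" "b \<in> S" "(y, b) \<in> orbit (x\<^sub>0, a)"
  shows "orbit_gauge x\<^sub>0 y a = b"
proof -
  have inj: "inj_on fst (orbit (x\<^sub>0, a))"
    using trivial x\<^sub>0 assms(1) by (simp add: orbits_meet_fibres_trivially_iff_inj_on_fst)
  show ?thesis unfolding orbit_gauge_def
  proof (rule the_equality)
    fix b' assume "b' \<in> S \<and> (y, b') \<in> orbit (x\<^sub>0, a)"
    then show "b' = b" using inj_onD[OF inj, of "(y, b')" "(y, b)"] assms(3) by simp
  qed (use assms in blast)
qed

lemma orbit_gauge: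
  assumes "y \<in> lmlt_orbit Q op x\<^sub>0" "a \<in> S"
  shows "orbit_gauge x\<^sub>0 y a \<in> S" "(y, orbit_gauge x\<^sub>0 y a) \<in> orbit (x\<^sub>0, a)"
  using orbit_lift[OF x\<^sub>0 assms(2,1)] orbit_gauge_eqI[OF assms(2)] by auto

lemma bij_betw_orbit_gauge:
  assumes y: "y \<in> lmlt_orbit Q op x\<^sub>0"
  shows "bij_betw (orbit_gauge x\<^sub>0 y) S S"
  unfolding bij_betw_def
proof (intro conjI inj_onI subset_antisym subsetI)
  fix a a' assume a: "a \<in> S" "a' \<in> S" and eq: "orbit_gauge x\<^sub>0 y a = orbit_gauge x\<^sub>0 y a'"
  have "(x\<^sub>0, a') \<in> orbit (y, orbit_gauge x\<^sub>0 y a)"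
    using orbit_sym orbit_gauge(2)[OF y a(2)] eq by simp
  then have "(x\<^sub>0, a') \<in> orbit (x\<^sub>0, a)"
    using orbit_gauge(2)[OF y a(1)] by (rule lmlt_orbit_trans)
  then show "a = a'" using trivial x\<^sub>0 a by (simp add: orbits_meet_fibres_trivially_def)
next
  fix b assume "b \<in> orbit_gauge x\<^sub>0 y ` S"
  then show "b \<in> S" using orbit_gauge(1)[OF y] by blast
next
  fix b assume b: "b \<in> S"
  have "y \<in> Q" using y lmlt_orbit_subset[of Q op] op_closed by blast
  have "x\<^sub>0 \<in> lmlt_orbit Q op y" using y by (rule lmlt_orbit_sym[rotated]) (rule op_closed)
  then obtain a where a: "a \<in> S" "(x\<^sub>0, a) \<in> orbit (y, b)"
    using orbit_lift[OF \<open>y \<in> Q\<close> b] by blast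
  then have "orbit_gauge x\<^sub>0 y a = b" using b orbit_sym by (blast intro: orbit_gauge_eqI)
  with a(1) show "b \<in> orbit_gauge x\<^sub>0 y ` S" by blast
qed

lemma \<theta>_orbit_gauge:
  assumes x: "x \<in> Q" and y: "y \<in> lmlt_orbit Q op x\<^sub>0" and a: "a \<in> S"
  shows "\<theta> x y (orbit_gauge x\<^sub>0 y a) = orbit_gauge x\<^sub>0 (op x y) a"
proof -
  have "y \<in> Q" using y lmlt_orbit_subset[of Q op] op_closed by blast
  have "ext_op op \<theta> (x, a) (y, orbit_gauge x\<^sub>0 y a) \<in> orbit (x\<^sub>0, a)"
    using orbit_gauge(2)[OF y a] by (rule lmlt_orbit.fwd) (simp add: x a)
  moreover have "\<theta> x y (orbit_gauge x\<^sub>0 y a) \<in> S"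
    using bij_betw_apply[OF bij_betw_\<theta>[OF x \<open>y \<in> Q\<close>] orbit_gauge(1)[OF y a]] .
  ultimately show ?thesis using a by (simp add: orbit_gauge_eqI)
qed

end

lemma orbits_meet_fibres_trivially_imp_cohomologous:
  assumes connected: "\<forall>x\<in>Q. \<forall>y\<in>Q. y \<in> lmlt_orbit Q op x"
    and trivial: orbits_meet_fibres_trivially
  shows "cohomologous_to_trivial Q op S \<theta>"
proof (cases "Q = {}")
  case True
  then show ?thesis by (simp add: cohomologous_to_trivial_def)
next
  case False
  then obtain x\<^sub>0 where x\<^sub>0: "x\<^sub>0 \<in> Q" by blast
  let ?\<gamma> = "orbit_gauge x\<^sub>0"
  have bij: "bij_betw (?\<gamma> y) S S" if "y \<in> Q" for y
    using bij_betw_orbit_gauge[OF trivial x\<^sub>0] connected x\<^sub>0 that by blast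
  show ?thesis unfolding cohomologous_to_trivial_def
  proof (intro exI[of _ ?\<gamma>] conjI ballI)
    fix x y a assume x: "x \<in> Q" and y: "y \<in> Q" and a: "a \<in> S"
    define c where "c = the_inv_into S (?\<gamma> y) a"
    have c: "c \<in> S" "?\<gamma> y c = a"
      unfolding c_def using bij[OF y] a
      by (auto simp: bij_betw_the_inv_into[THEN bij_betw_apply] f_the_inv_into_f_bij_betw)
    show "\<theta> x y a = ?\<gamma> (op x y) c"
      using \<theta>_orbit_gauge[OF trivial x\<^sub>0 x _ c(1)] connected x\<^sub>0 y c(2) by auto
  qed (rule bij)
qed

end

theorem proposition2p3:
  fixes Q :: "'q set" and op :: "'q \<Rightarrow> 'q \<Rightarrow> 'q"
    and S :: "'s set" and \<theta> :: "'q \<Rightarrow> 'q \<Rightarrow> 's \<Rightarrow> 's"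
  assumes "connected_quandle Q op"
    and "quandle_cocycle Q op S \<theta>"
  shows "(cohomologous_to_trivial Q op S \<theta>
           \<longleftrightarrow> (\<forall>x\<in>Q. \<forall>a\<in>S. \<forall>b\<in>S.
                  (x, b) \<in> lmlt_orbit (Q \<times> S) (ext_op op \<theta>) (x, a) \<longrightarrow> a = b))
       \<and> ((\<forall>x\<in>Q. \<forall>a\<in>S. \<forall>b\<in>S.
                  (x, b) \<in> lmlt_orbit (Q \<times> S) (ext_op op \<theta>) (x, a) \<longrightarrow> a = b)
           \<longleftrightarrow> (\<forall>u\<in>Q \<times> S.
                  quandle_iso (lmlt_orbit (Q \<times> S) (ext_op op \<theta>) u) (ext_op op \<theta>) Q op fst))"
proof -
  interpret twisted_product Q op S \<theta>
    using assms by unfold_locales (auto simp: connected_quandle_def quandle_def quandle_cocycle_def)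
  have connected: "\<forall>x\<in>Q. \<forall>y\<in>Q. y \<in> lmlt_orbit Q op x"
    using assms(1) by (simp add: connected_quandle_def)
  have "cohomologous_to_trivial Q op S \<theta> \<longleftrightarrow> orbits_meet_fibres_trivially"
    using cohomologous_imp_orbits_meet_fibres_trivially
      orbits_meet_fibres_trivially_imp_cohomologous[OF connected] by blast
  moreover have "orbits_meet_fibres_trivially
      \<longleftrightarrow> (\<forall>u\<in>Q \<times> S. quandle_iso (orbit u) (ext_op op \<theta>) Q op fst)"
    using orbits_meet_fibres_trivially_iff_inj_on_fst quandle_iso_fst_iff_inj_on[OF connected]
    by simp
  ultimately show ?thesis by (simp add: orbits_meet_fibres_trivially_def)
qed

end
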